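(* In the setting described in the context, assume $0<a<1$ and $b>0$. Then $$\mu_D^\top\hat\mu\ \ge\ p^{a+2b}\{1+o_p(1)\},$$ i.e. there are random variables $\xi_p\to0$ in probability with $P\big(\mu_D^\top\hat\mu\ge p^{a+2b}(1+\xi_p)\big)\to 1$ as $p\to\infty$.
   Context: Setting (NPEB estimator of a sparse mean difference). Let $p\to\infty$ and fix positive integers $n_1,n_2$; set $a_n=(1/n_1+1/n_2)^{-1/2}$ (a fixed positive constant). Fix $0<a<1$ and $b\in\mathbb{R}$, and put $\Delta=p^b$, $p_1=[p^a]$ (integer part), and bandwidth $h=1/\sqrt{\log p}$. Let $Z_1,\dots,Z_p$ be i.i.d. $N(0,1)$ and define $\bar z_{D,i}=\Delta+Z_i/a_n$ for $1\le i\le p_1$ and $\bar z_{D,i}=Z_i/a_n$ for $p_1<i\le p$, so that $\bar z_D\sim N_p(\mu_D,a_n^{-2}I_p)$ with $\mu_D=(\Delta,\dots,\Delta,0,\dots,0)^\top$ (the first $p_1$ entries equal to $\Delta$). With $\phi$ the standard normal density, the nonparametric empirical Bayes (NPEB, kernel / $f$-modeling) estimator $\hat\mu=(\hat\mu_1,\dots,\hat\mu_p)$ of $\mu_D$ is $$\hat\mu_i=\bar z_{D,i}+\frac{1}{h^2}\,\frac{\sum_{j=1}^p(\bar z_{D,j}-\bar z_{D,i})\,\phi\{a_n(\bar z_{D,i}-\bar z_{D,j})/h\}}{\sum_{j=1}^p\phi\{a_n(\bar z_{D,i}-\bar z_{D,j})/h\}},\qquad 1\le i\le p.$$ *)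

theory Defs
  imports "HOL-Probability.Probability"
begin

text \<open>Probability space for dimension p: Z_1,...,Z_p i.i.d. N(0,1), sample point
  omega :: nat => real with Z_i = omega i for 1 <= i <= p.\<close>
definition npeb_space :: "nat \<Rightarrow> (nat \<Rightarrow> real) measure" where
  "npeb_space p = PiM {1..p} (\<lambda>_. density lborel std_normal_density)"

definition npeb_an :: "nat \<Rightarrow> nat \<Rightarrow> real" where
  "npeb_an n1 n2 = (1 / real n1 + 1 / real n2) powr (-1/2)"

definition npeb_p1 :: "real \<Rightarrow> nat \<Rightarrow> nat" where
  "npeb_p1 a p = nat \<lfloor>real p powr a\<rfloor>"

definition npeb_Delta :: "real \<Rightarrow> nat \<Rightarrow> real" where
  "npeb_Delta b p = real p powr b"

definition npeb_h :: "nat \<Rightarrow> real" where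
  "npeb_h p = 1 / sqrt (ln (real p))"

definition npeb_muD :: "real \<Rightarrow> real \<Rightarrow> nat \<Rightarrow> nat \<Rightarrow> real" where
  "npeb_muD a b p i = (if 1 \<le> i \<and> i \<le> npeb_p1 a p then npeb_Delta b p else 0)"

definition npeb_zbar :: "nat \<Rightarrow> nat \<Rightarrow> real \<Rightarrow> real \<Rightarrow> nat \<Rightarrow> (nat \<Rightarrow> real) \<Rightarrow> nat \<Rightarrow> real" where
  "npeb_zbar n1 n2 a b p \<omega> i = npeb_muD a b p i + \<omega> i / npeb_an n1 n2"

definition npeb_muhat :: "nat \<Rightarrow> nat \<Rightarrow> real \<Rightarrow> real \<Rightarrow> nat \<Rightarrow> (nat \<Rightarrow> real) \<Rightarrow> nat \<Rightarrow> real" where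
  "npeb_muhat n1 n2 a b p \<omega> i =
     (let z = npeb_zbar n1 n2 a b p \<omega>; an = npeb_an n1 n2; h = npeb_h p in
      z i + (1 / h\<^sup>2) *
        ((\<Sum>j\<in>{1..p}. (z j - z i) * std_normal_density (an * (z i - z j) / h)) /
         (\<Sum>j\<in>{1..p}. std_normal_density (an * (z i - z j) / h))))"

definition npeb_inner :: "nat \<Rightarrow> nat \<Rightarrow> real \<Rightarrow> real \<Rightarrow> nat \<Rightarrow> (nat \<Rightarrow> real) \<Rightarrow> real" where
  "npeb_inner n1 n2 a b p \<omega> = (\<Sum>i\<in>{1..p}. npeb_muD a b p i * npeb_muhat n1 n2 a b p \<omega> i)"

end

theory Submission
  imports Defs "HOL-Real_Asymp.Real_Asymp"
begin

text \<open>
  The correction added to z_i in mu_hat_i is ln p times a Gaussian-weighted mean of the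
  differences z_j - z_i. The self-term keeps the total weight at least phi(0), and because
  h^2 = 1 / ln p, a neighbour with z_j < z_i - K carries weight of order 1/p. Hence the mean
  is at least -K - O(1), and deterministically mu_hat_i >= z_i - O(ln p). Summing over the p1
  signal coordinates gives
    mu_D' mu_hat >= p1 Delta^2 - (Delta / a_n) sum_{i <= p1} |Z_i| - O(p1 Delta ln p).
  Since Delta = p^b tends to infinity, the last term is o(p^(a+2b)); the noise term has
  expectation O(p^(a+b)), so it is o_p(p^(a+2b)) by Markov's inequality.
\<close>

lemma weighted_mean_shift_ge:
  fixes w :: "real \<Rightarrow> real" and x :: "'a \<Rightarrow> real"
  assumes "finite J" "i \<in> J" and w_nonneg: "\<And>t. 0 \<le> w t" and "0 < w 0"
    and "0 \<le> K" "0 \<le> M" and tail: "\<And>t. K < t \<Longrightarrow> t * w t \<le> M"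
  shows "- K - real (card J) * M / w 0
           \<le> (\<Sum>j\<in>J. (x j - x i) * w (x i - x j)) / (\<Sum>j\<in>J. w (x i - x j))"
proof -
  define W where "W = (\<Sum>j\<in>J. w (x i - x j))"
  have "w (x i - x i) \<le> W"
    unfolding W_def using assms(1,2) w_nonneg by (intro member_le_sum) auto
  then have W: "w 0 \<le> W" by simp
  have term_ge: "- K * w (x i - x j) - M \<le> (x j - x i) * w (x i - x j)" for j
  proof (cases "K < x i - x j")
    case True
    have "0 \<le> K * w (x i - x j)" using \<open>0 \<le> K\<close> w_nonneg by simp
    then show ?thesis using tail[OF True] by (simp add: algebra_simps)
  next
    case False
    then have "(x i - x j) * w (x i - x j) \<le> K * w (x i - x j)"
      using w_nonneg by (intro mult_right_mono) auto
    then show ?thesis using \<open>0 \<le> M\<close> by (simp add: algebra_simps)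
  qed
  have "- K * W - real (card J) * M = (\<Sum>j\<in>J. - K * w (x i - x j) - M)"
    by (simp add: W_def sum_subtractf sum_distrib_left)
  also have "\<dots> \<le> (\<Sum>j\<in>J. (x j - x i) * w (x i - x j))"
    by (intro sum_mono term_ge)
  finally have num: "- K * W - real (card J) * M \<le> (\<Sum>j\<in>J. (x j - x i) * w (x i - x j))" .
  have "- K - real (card J) * M / w 0 \<le> - K - real (card J) * M / W"
    using W \<open>0 < w 0\<close> \<open>0 \<le> M\<close> by (simp add: frac_le)
  also have "\<dots> = (- K * W - real (card J) * M) / W"
    using W \<open>0 < w 0\<close> by (simp add: field_simps)
  also have "\<dots> \<le> (\<Sum>j\<in>J. (x j - x i) * w (x i - x j)) / W"
    using num W \<open>0 < w 0\<close> by (intro divide_right_mono) auto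
  finally show ?thesis unfolding W_def .
qed

lemma mult_exp_neg_square_le:
  fixes q K t :: real
  assumes "1 \<le> q" "1 \<le> K" "K \<le> t"
  shows "t * exp (- q * t\<^sup>2) \<le> exp (K\<^sup>2) * exp (- q * K\<^sup>2)"
proof -
  have "t \<le> t\<^sup>2" using assms by (simp add: power2_eq_square)
  also have "\<dots> \<le> exp (t\<^sup>2)" using exp_ge_add_one_self[of "t\<^sup>2"] by linarith
  finally have "t * exp (- q * t\<^sup>2) \<le> exp (t\<^sup>2) * exp (- q * t\<^sup>2)"
    by (intro mult_right_mono) auto
  also have "\<dots> = exp (- (q - 1) * t\<^sup>2)" by (simp add: mult_exp_exp algebra_simps)
  also have "\<dots> \<le> exp (- (q - 1) * K\<^sup>2)"
    using assms by (intro exp_mono mult_left_mono_neg power_mono) auto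
  also have "\<dots> = exp (K\<^sup>2) * exp (- q * K\<^sup>2)" by (simp add: mult_exp_exp algebra_simps)
  finally show ?thesis .
qed

lemma tendsto_measure_abs_diff_gt_zero:
  fixes M :: "nat \<Rightarrow> 'a measure" and A :: "nat \<Rightarrow> real" and X :: "nat \<Rightarrow> 'a \<Rightarrow> real"
  assumes prob: "\<And>n. prob_space (M n)" and int: "\<And>n. integrable (M n) (X n)"
    and nonneg: "\<And>n x. 0 \<le> X n x"
    and "A \<longlonglongrightarrow> 0" and mean: "(\<lambda>n. \<integral>x. X n x \<partial>M n) \<longlonglongrightarrow> 0" and "0 < \<epsilon>"
  shows "(\<lambda>n. measure (M n) {x \<in> space (M n). \<epsilon> < \<bar>A n - X n x\<bar>}) \<longlonglongrightarrow> 0"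
proof (rule tendsto_sandwich[of "\<lambda>_. 0" _ _ "\<lambda>n. (\<integral>x. X n x \<partial>M n) / (\<epsilon> / 2)"])
  have "eventually (\<lambda>n. \<bar>A n\<bar> < \<epsilon> / 2) sequentially"
    using tendstoD[OF \<open>A \<longlonglongrightarrow> 0\<close>, of "\<epsilon> / 2"] \<open>0 < \<epsilon>\<close> by (simp add: dist_real_def)
  then show "eventually (\<lambda>n. measure (M n) {x \<in> space (M n). \<epsilon> < \<bar>A n - X n x\<bar>}
      \<le> (\<integral>x. X n x \<partial>M n) / (\<epsilon> / 2)) sequentially"
  proof eventually_elim
    case (elim n)
    interpret prob_space "M n" by (rule prob)
    have [measurable]: "X n \<in> borel_measurable (M n)" using int by (rule borel_measurable_integrable)
    have "{x \<in> space (M n). \<epsilon> < \<bar>A n - X n x\<bar>} \<subseteq> {x \<in> space (M n). \<epsilon> / 2 \<le> X n x}"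
    proof safe
      fix x assume "\<epsilon> < \<bar>A n - X n x\<bar>"
      then show "\<epsilon> / 2 \<le> X n x" using elim nonneg[of n x] by (simp add: abs_if split: if_splits)
    qed
    then have "measure (M n) {x \<in> space (M n). \<epsilon> < \<bar>A n - X n x\<bar>}
        \<le> measure (M n) {x \<in> space (M n). \<epsilon> / 2 \<le> X n x}"
      by (rule finite_measure_mono) measurable
    also have "\<dots> \<le> (\<integral>x. X n x \<partial>M n) / (\<epsilon> / 2)"
      using int nonneg \<open>0 < \<epsilon>\<close>
      by (intro integral_Markov_inequality_measure[where A = "space (M n)"]) auto
    finally show ?case .
  qed
  show "(\<lambda>n. (\<integral>x. X n x \<partial>M n) / (\<epsilon> / 2)) \<longlonglongrightarrow> 0"
    using tendsto_divide_zero[OF mean] .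
qed simp_all

lemma ex_relative_lower_bound_in_probability:
  fixes M :: "nat \<Rightarrow> 'a measure" and f X :: "nat \<Rightarrow> 'a \<Rightarrow> real" and s P :: "nat \<Rightarrow> real"
  assumes prob: "\<And>n. prob_space (M n)" and int: "\<And>n. integrable (M n) (X n)"
    and nonneg: "\<And>n x. 0 \<le> X n x" "\<And>n. 0 \<le> P n" and pos: "eventually (\<lambda>n. 0 < P n) sequentially"
    and lower: "eventually (\<lambda>n. \<forall>x. s n - X n x \<le> f n x) sequentially"
    and signal: "(\<lambda>n. s n / P n) \<longlonglongrightarrow> 1" and noise: "(\<lambda>n. (\<integral>x. X n x \<partial>M n) / P n) \<longlonglongrightarrow> 0"
  shows "\<exists>\<xi>. (\<forall>n. \<xi> n \<in> borel_measurable (M n)) \<and>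
     (\<forall>\<epsilon>>0. (\<lambda>n. measure (M n) {x \<in> space (M n). \<bar>\<xi> n x\<bar> > \<epsilon>}) \<longlonglongrightarrow> 0) \<and>
     (\<lambda>n. measure (M n) {x \<in> space (M n). f n x \<ge> P n * (1 + \<xi> n x)}) \<longlonglongrightarrow> 1"
proof (intro exI[of _ "\<lambda>n x. (s n / P n - 1) - X n x / P n"] conjI allI impI)
  show "(\<lambda>x. (s n / P n - 1) - X n x / P n) \<in> borel_measurable (M n)" for n
    using borel_measurable_integrable[OF int] by measurable
  show "(\<lambda>n. measure (M n) {x \<in> space (M n). \<bar>s n / P n - 1 - X n x / P n\<bar> > \<epsilon>}) \<longlonglongrightarrow> 0"
    if "0 < \<epsilon>" for \<epsilon>
    using prob int nonneg noise signal that
    by (intro tendsto_measure_abs_diff_gt_zero[where A = "\<lambda>n. s n / P n - 1" and X = "\<lambda>n x. X n x / P n"])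
       (auto simp: LIM_zero)
  show "(\<lambda>n. measure (M n) {x \<in> space (M n). f n x \<ge> P n * (1 + (s n / P n - 1 - X n x / P n))}) \<longlonglongrightarrow> 1"
    using pos lower
  proof (intro tendsto_eventually, eventually_elim)
    case (elim n)
    then have "P n * (1 + (s n / P n - 1 - X n x / P n)) = s n - X n x" for x
      by (simp add: field_simps)
    then show ?case using elim by (simp add: prob_space.prob_space[OF prob])
  qed
qed

lemma powr_add_twice: "(x::real) powr (a + 2 * b) = x powr a * (x powr b)\<^sup>2"
  by (simp only: mult_2 powr_add power2_eq_square)

lemma npeb_an_pos:
  assumes "0 < n1" "0 < n2" shows "0 < npeb_an n1 n2"
proof -
  have "0 < 1 / real n1 + 1 / real n2" using assms by (simp add: add_pos_pos)
  then show ?thesis unfolding npeb_an_def by simp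
qed

lemma npeb_p1_le: "a \<le> 1 \<Longrightarrow> npeb_p1 a p \<le> p"
proof (cases "p = 0")
  case False
  assume "a \<le> 1"
  then have "real p powr a \<le> real p powr 1" using False by (intro powr_mono) auto
  then have "\<lfloor>real p powr a\<rfloor> \<le> int p" using False by (simp add: floor_le_iff)
  then show ?thesis unfolding npeb_p1_def by simp
qed (simp add: npeb_p1_def)

lemma npeb_p1_ratio_tendsto:
  assumes "0 < a" shows "(\<lambda>p. real (npeb_p1 a p) / real p powr a) \<longlonglongrightarrow> 1"
proof (rule tendsto_sandwich[of "\<lambda>p. (real p powr a - 1) / real p powr a" _ _ "\<lambda>p. real p powr a / real p powr a"])
  have floor: "real p powr a - 1 \<le> real (npeb_p1 a p)" "real (npeb_p1 a p) \<le> real p powr a" for p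
    using floor_correct[of "real p powr a"] by (simp_all add: npeb_p1_def)
  show "eventually (\<lambda>p. (real p powr a - 1) / real p powr a \<le> real (npeb_p1 a p) / real p powr a) sequentially"
    "eventually (\<lambda>p. real (npeb_p1 a p) / real p powr a \<le> real p powr a / real p powr a) sequentially"
    using floor by (auto intro!: always_eventually divide_right_mono)
  show "(\<lambda>p. (real p powr a - 1) / real p powr a) \<longlonglongrightarrow> 1"
    "(\<lambda>p. real p powr a / real p powr a) \<longlonglongrightarrow> 1"
    using assms by real_asymp+
qed

lemma npeb_signal_tendsto:
  assumes "0 < a" "0 < b"
  shows "(\<lambda>p. real (npeb_p1 a p) * npeb_Delta b p * (npeb_Delta b p - c * ln (real p))
           / real p powr (a + 2 * b)) \<longlonglongrightarrow> 1"
proof -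
  have "(\<lambda>p. real (npeb_p1 a p) / real p powr a * (1 - c * (ln (real p) / real p powr b)))
          \<longlonglongrightarrow> 1 * (1 - c * 0)"
    using assms by (intro tendsto_intros npeb_p1_ratio_tendsto assms(1)) real_asymp
  moreover have "eventually (\<lambda>p. real (npeb_p1 a p) / real p powr a * (1 - c * (ln (real p) / real p powr b))
      = real (npeb_p1 a p) * npeb_Delta b p * (npeb_Delta b p - c * ln (real p))
           / real p powr (a + 2 * b)) sequentially"
    using eventually_gt_at_top[of 0]
    by eventually_elim (unfold powr_add_twice npeb_Delta_def, simp add: field_simps power2_eq_square)
  ultimately show ?thesis by (simp add: Lim_transform_eventually)
qed

lemma npeb_noise_scale_tendsto:
  assumes "0 < a" "0 < b"
  shows "(\<lambda>p. real (npeb_p1 a p) * npeb_Delta b p / real p powr (a + 2 * b)) \<longlonglongrightarrow> 0"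
proof -
  have "(\<lambda>p. real (npeb_p1 a p) / real p powr a * (1 / real p powr b)) \<longlonglongrightarrow> 1 * 0"
    using assms by (intro tendsto_intros npeb_p1_ratio_tendsto assms(1)) real_asymp
  moreover have "eventually (\<lambda>p. real (npeb_p1 a p) / real p powr a * (1 / real p powr b)
      = real (npeb_p1 a p) * npeb_Delta b p / real p powr (a + 2 * b)) sequentially"
    using eventually_gt_at_top[of 0]
    by eventually_elim (unfold powr_add_twice npeb_Delta_def, simp add: field_simps power2_eq_square)
  ultimately show ?thesis by (simp add: Lim_transform_eventually)
qed

lemma npeb_muhat_ge:
  assumes K: "1 \<le> K" "2 \<le> (npeb_an n1 n2)\<^sup>2 * K\<^sup>2"
    and p: "2 \<le> (npeb_an n1 n2)\<^sup>2 * ln (real p)" and i: "i \<in> {1..p}"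
  shows "npeb_zbar n1 n2 a b p \<omega> i - ln (real p) * (K + exp (K\<^sup>2)) \<le> npeb_muhat n1 n2 a b p \<omega> i"
proof -
  define z where "z = npeb_zbar n1 n2 a b p \<omega>"
  define an where "an = npeb_an n1 n2"
  define L where "L = ln (real p)"
  define q where "q = an\<^sup>2 * L / 2"
  define w where "w t = std_normal_density (an * t / npeb_h p)" for t
  define M where "M = std_normal_density 0 * exp (K\<^sup>2) * exp (- L)"
  have "0 < L"
  proof (rule ccontr)
    assume "\<not> 0 < L"
    then have "an\<^sup>2 * L \<le> 0" by (simp add: mult_nonneg_nonpos)
    with p show False unfolding an_def L_def by simp
  qed
  then have "1 < real p" unfolding L_def by (cases "p = 0") (auto simp: ln_gt_zero_iff)
  have q: "1 \<le> q" "L \<le> q * K\<^sup>2"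
    using p K \<open>0 < L\<close> unfolding q_def an_def L_def by (auto simp: field_simps)
  have w: "w t = std_normal_density 0 * exp (- q * t\<^sup>2)" for t
    using \<open>0 < L\<close> by (simp add: w_def q_def L_def npeb_h_def std_normal_density_def power_divide
        power_mult_distrib field_simps)
  have tail: "t * w t \<le> M" if "K < t" for t
  proof -
    have "t * exp (- q * t\<^sup>2) \<le> exp (K\<^sup>2) * exp (- q * K\<^sup>2)"
      using q K that by (intro mult_exp_neg_square_le) auto
    also have "\<dots> \<le> exp (K\<^sup>2) * exp (- L)" using q by simp
    finally show ?thesis unfolding w M_def by (simp add: normal_density_pos mult_left_mono mult.assoc)
  qed
  have "0 < std_normal_density 0" by (simp add: normal_density_pos)
  \<comment> \<open>\<open>exp (- L) = 1 / p\<close>, so the \<open>p\<close> tail contributions together cost at most \<open>exp (K\<^sup>2)\<close>\<close>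
  then have card: "real (card {1..p}) * M / w 0 = exp (K\<^sup>2)"
    using \<open>1 < real p\<close> by (simp add: w M_def L_def exp_minus)
  have h: "1 / (npeb_h p)\<^sup>2 = L"
    using \<open>0 < L\<close> by (simp add: npeb_h_def L_def power_divide)
  have "z i + L * (- K - exp (K\<^sup>2)) \<le> z i + L *
      ((\<Sum>j\<in>{1..p}. (z j - z i) * w (z i - z j)) / (\<Sum>j\<in>{1..p}. w (z i - z j)))"
    using weighted_mean_shift_ge[of "{1..p}" i w K M z] i K tail \<open>0 < L\<close> card
    by (intro add_left_mono mult_left_mono) (auto simp: w normal_density_pos M_def)
  also have "\<dots> = npeb_muhat n1 n2 a b p \<omega> i"
    unfolding npeb_muhat_def Let_def h z_def an_def w_def ..
  finally show ?thesis unfolding z_def L_def by (simp add: algebra_simps)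
qed

lemma npeb_inner_ge:
  assumes "0 < npeb_an n1 n2" "a \<le> 1" and K: "1 \<le> K" "2 \<le> (npeb_an n1 n2)\<^sup>2 * K\<^sup>2"
    and p: "2 \<le> (npeb_an n1 n2)\<^sup>2 * ln (real p)"
  shows "real (npeb_p1 a p) * npeb_Delta b p * (npeb_Delta b p - (K + exp (K\<^sup>2)) * ln (real p))
           - npeb_Delta b p / npeb_an n1 n2 * (\<Sum>i\<in>{1..npeb_p1 a p}. \<bar>\<omega> i\<bar>)
         \<le> npeb_inner n1 n2 a b p \<omega>"
proof -
  define D where "D = npeb_Delta b p"
  define an where "an = npeb_an n1 n2"
  define p1 where "p1 = npeb_p1 a p"
  define R where "R = ln (real p) * (K + exp (K\<^sup>2))"
  have "p1 \<le> p" unfolding p1_def using \<open>a \<le> 1\<close> by (rule npeb_p1_le)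
  have "0 \<le> D" unfolding D_def npeb_Delta_def by simp
  have coord: "D - \<bar>\<omega> i\<bar> / an - R \<le> npeb_muhat n1 n2 a b p \<omega> i" if "i \<in> {1..p1}" for i
  proof -
    have "- \<bar>\<omega> i\<bar> / an \<le> \<omega> i / an"
      using \<open>0 < npeb_an n1 n2\<close> unfolding an_def by (intro divide_right_mono) auto
    then have "D - \<bar>\<omega> i\<bar> / an \<le> npeb_zbar n1 n2 a b p \<omega> i"
      using that unfolding npeb_zbar_def npeb_muD_def D_def an_def p1_def by simp
    moreover have "npeb_zbar n1 n2 a b p \<omega> i - R \<le> npeb_muhat n1 n2 a b p \<omega> i"
      unfolding R_def using K p that \<open>p1 \<le> p\<close> by (intro npeb_muhat_ge) auto
    ultimately show ?thesis by linarith
  qed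
  have "real p1 * D * (D - R) - D / an * (\<Sum>i\<in>{1..p1}. \<bar>\<omega> i\<bar>)
      = (\<Sum>i\<in>{1..p1}. D * (D - \<bar>\<omega> i\<bar> / an - R))"
    by (simp add: sum_subtractf sum.distrib sum_distrib_left sum_divide_distrib algebra_simps)
  also have "\<dots> \<le> (\<Sum>i\<in>{1..p1}. D * npeb_muhat n1 n2 a b p \<omega> i)"
    using coord \<open>0 \<le> D\<close> by (intro sum_mono mult_left_mono) auto
  also have "\<dots> = npeb_inner n1 n2 a b p \<omega>"
    unfolding npeb_inner_def npeb_muD_def D_def p1_def
    using \<open>p1 \<le> p\<close> by (intro sum.mono_neutral_cong_right[symmetric]) (auto simp: p1_def)
  finally show ?thesis unfolding D_def an_def p1_def R_def by (simp add: mult.commute)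
qed

lemma prob_space_npeb_space: "prob_space (npeb_space p)"
  unfolding npeb_space_def by (intro prob_space_PiM prob_space_normal_density) simp

lemma
  assumes "i \<in> {1..p}"
  shows integrable_npeb_abs_component: "integrable (npeb_space p) (\<lambda>\<omega>. \<bar>\<omega> i\<bar>)"
    and integral_npeb_abs_component: "(\<integral>\<omega>. \<bar>\<omega> i\<bar> \<partial>npeb_space p) = sqrt (2 / pi)"
proof -
  have distr: "distr (npeb_space p) std_normal_distribution (\<lambda>\<omega>. \<omega> i) = std_normal_distribution"
    unfolding npeb_space_def using assms
    by (intro distr_PiM_component prob_space_normal_density) auto
  have meas: "(\<lambda>\<omega>. \<omega> i) \<in> measurable (npeb_space p) std_normal_distribution"
    unfolding npeb_space_def using assms by (auto intro: measurable_component_singleton)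
  have "has_bochner_integral lborel (\<lambda>x. std_normal_density x *\<^sub>R \<bar>x\<bar>) (sqrt (2 / pi))"
    using std_normal_moment_abs_odd[of 0] by simp
  then have "has_bochner_integral std_normal_distribution abs (sqrt (2 / pi))"
    by (subst has_bochner_integral_density) auto
  then have "integrable std_normal_distribution abs" "integral\<^sup>L std_normal_distribution abs = sqrt (2 / pi)"
    by (simp_all add: has_bochner_integral_iff)
  then show "integrable (npeb_space p) (\<lambda>\<omega>. \<bar>\<omega> i\<bar>)"
    and "(\<integral>\<omega>. \<bar>\<omega> i\<bar> \<partial>npeb_space p) = sqrt (2 / pi)"
    using integrable_distr_eq[OF meas, of abs] integral_distr[OF meas, of abs] distr by simp_all
qed

lemma
  assumes "n \<le> p"
  shows integrable_npeb_abs_sum: "integrable (npeb_space p) (\<lambda>\<omega>. \<Sum>i\<in>{1..n}. \<bar>\<omega> i\<bar>)"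
    and integral_npeb_abs_sum: "(\<integral>\<omega>. (\<Sum>i\<in>{1..n}. \<bar>\<omega> i\<bar>) \<partial>npeb_space p) = real n * sqrt (2 / pi)"
  using assms
  by (auto intro!: Bochner_Integration.integrable_sum integrable_npeb_abs_component
      simp: Bochner_Integration.integral_sum integrable_npeb_abs_component integral_npeb_abs_component)

theorem mainTheorem8:
  fixes n1 n2 :: nat and a b :: real
  assumes "n1 > 0" and "n2 > 0" and "0 < a" and "a < 1" and "b > 0"
  shows "\<exists>\<xi> :: nat \<Rightarrow> (nat \<Rightarrow> real) \<Rightarrow> real.
     (\<forall>p. \<xi> p \<in> borel_measurable (npeb_space p)) \<and>
     (\<forall>\<epsilon>>0. (\<lambda>p. measure (npeb_space p) {\<omega> \<in> space (npeb_space p). \<bar>\<xi> p \<omega>\<bar> > \<epsilon>})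
                 \<longlonglongrightarrow> 0) \<and>
     (\<lambda>p. measure (npeb_space p)
            {\<omega> \<in> space (npeb_space p).
               npeb_inner n1 n2 a b p \<omega> \<ge> real p powr (a + 2 * b) * (1 + \<xi> p \<omega>)})
       \<longlonglongrightarrow> 1"
proof -
  define an where "an = npeb_an n1 n2"
  have "0 < an" unfolding an_def using assms by (intro npeb_an_pos)
  define K where "K = 1 + 2 / an\<^sup>2"
  have K: "1 \<le> K" "2 \<le> an\<^sup>2 * K\<^sup>2"
    using \<open>0 < an\<close> unfolding K_def by (auto simp: field_simps power2_eq_square)
  define S where "S p \<omega> = (\<Sum>i\<in>{1..npeb_p1 a p}. \<bar>\<omega> i\<bar>)" for p and \<omega> :: "nat \<Rightarrow> real"
  have p1_le: "npeb_p1 a p \<le> p" for p using \<open>a < 1\<close> by (intro npeb_p1_le) simp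
  have "eventually (\<lambda>p. 2 \<le> an\<^sup>2 * ln (real p)) sequentially"
    using \<open>0 < an\<close> by real_asymp
  then have lower: "eventually (\<lambda>p. \<forall>\<omega>. real (npeb_p1 a p) * npeb_Delta b p
      * (npeb_Delta b p - (K + exp (K\<^sup>2)) * ln (real p)) - npeb_Delta b p / an * S p \<omega>
      \<le> npeb_inner n1 n2 a b p \<omega>) sequentially"
    by eventually_elim (use npeb_inner_ge \<open>0 < an\<close> \<open>a < 1\<close> K in \<open>auto simp: an_def S_def\<close>)
  have int: "integrable (npeb_space p) (\<lambda>\<omega>. npeb_Delta b p / an * S p \<omega>)" for p
    unfolding S_def using integrable_npeb_abs_sum[OF p1_le] by (rule integrable_mult_right)
  have "(\<lambda>p. sqrt (2 / pi) / an * (real (npeb_p1 a p) * npeb_Delta b p / real p powr (a + 2 * b)))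
      \<longlonglongrightarrow> 0"
    using npeb_noise_scale_tendsto[OF \<open>0 < a\<close> \<open>0 < b\<close>] by (rule tendsto_mult_right_zero)
  then have noise: "(\<lambda>p. (\<integral>\<omega>. npeb_Delta b p / an * S p \<omega> \<partial>npeb_space p) / real p powr (a + 2 * b))
      \<longlonglongrightarrow> 0"
    unfolding S_def integral_mult_right_zero integral_npeb_abs_sum[OF p1_le] by (simp add: ac_simps)
  show ?thesis
    by (rule ex_relative_lower_bound_in_probability[OF prob_space_npeb_space int _ _ _ lower
          npeb_signal_tendsto[OF \<open>0 < a\<close> \<open>0 < b\<close>] noise])
       (use \<open>0 < an\<close> in \<open>auto simp: S_def npeb_Delta_def sum_nonneg eventually_gt_at_top\<close>)
qed

end
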